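(* Under the hypotheses in the context (decomposition of $\mathcal X$ over $A$, $g\in\mathcal G_s$, integer $T>0$, and $\operatorname{argmin}_{u\in\mathcal U} J^*_{t+1}(Ax+Bu)\cap[\bigoplus_{i\in\mathcal I}\mathcal E_i]\neq\emptyset$ for all $x\in\mathcal X$, $t\in\{0,\dots,T-1\}$), for every $i\in\mathcal I$ the restriction of the optimal cost $J^*$ of $(A,B,g,T)$ to $\mathcal X_i$ equals the optimal cost $\bar J_i^*$ of the subproblem $(A,B|_{\mathcal E_i},g,T)$.
   Context: Let $\mathcal F$ be a field and $\mathcal X,\mathcal U$ finite-dimensional vector spaces over $\mathcal F$. Let $A:\mathcal X\to\mathcal X$ and $B:\mathcal U\to\mathcal X$ be linear maps with $B$ injective, and let $g:\mathcal X\to\mathbb R_{\ge0}$ satisfy $g(x)=0\iff x=0$. Standing assumption: all minima appearing below are attained. For the finite-horizon problem $(A,B,g,T)$ associated with $x_{t+1}=Ax_t+Bu_t$ (cost $\sum_{t=0}^Tg(x_t)$ minimized over $u_0,\dots,u_{T-1}\in\mathcal U$), the cost-to-go functions are $J^*_T=g$ and $J^*_t(x)=g(x)+\min_{u\in\mathcal U}J^*_{t+1}(Ax+Bu)$; the optimal cost is $J^*=J^*_0$. A decomposition of $\mathcal X$ over $A$ is a direct sum $\mathcal X=\mathcal X_1\oplus\cdots\oplus\mathcal X_r$ with $r>1$ and $A\mathcal X_i\subseteq\mathcal X_i$ for all $i\in\mathcal I=\{1,\dots,r\}$; $\rho_i:\mathcal X\to\mathcal X_i$ is the projection along the other summands.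 $\mathcal G_s$ is the set of $h:\mathcal X\to\mathbb R_{\ge0}$ with $h(x)=\sum_i h(\rho_i(x))$ for all $x$. $\mathcal E_i=\{u\in\mathcal U:Bu\in\mathcal X_i\}$. Subproblem $(A,B|_{\mathcal E_i},g,T)$: system $x_{i,t+1}=Ax_{i,t}+B\bar u_{i,t}$ with states in $\mathcal X_i$ and inputs in $\mathcal E_i$, cost $\sum_{t=0}^Tg(x_{i,t})$; its optimal cost is $\bar J_i^*$ (equivalently $\bar J^*_{i,0}$ where $\bar J^*_{i,T}=g|_{\mathcal X_i}$ and $\bar J^*_{i,t}(z)=g(z)+\min_{u\in\mathcal E_i}\bar J^*_{i,t+1}(Az+Bu)$). *)

theory Defs
  imports Complex_Main
begin

text \<open>Direct-sum decomposition of the state space X (the whole type 'x) into the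
  subspaces Xs 1, ..., Xs r (r > 1), each invariant under A.\<close>
definition is_decomposition ::
  "('f::field \<Rightarrow> 'x::ab_group_add \<Rightarrow> 'x) \<Rightarrow> ('x \<Rightarrow> 'x) \<Rightarrow> nat \<Rightarrow> (nat \<Rightarrow> 'x set) \<Rightarrow> bool" where
  "is_decomposition scale A r Xs \<longleftrightarrow>
     r > 1 \<and>
     (\<forall>i\<in>{1..r}. module.subspace scale (Xs i)) \<and>
     (\<forall>i\<in>{1..r}. A ` Xs i \<subseteq> Xs i) \<and>
     (\<forall>x. \<exists>f. (\<forall>i\<in>{1..r}. f i \<in> Xs i) \<and> x = (\<Sum>i\<in>{1..r}. f i)) \<and>
     (\<forall>f. (\<forall>i\<in>{1..r}. f i \<in> Xs i) \<and> (\<Sum>i\<in>{1..r}. f i) = 0 \<longrightarrow> (\<forall>i\<in>{1..r}. f i = 0))"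

definition proj :: "nat \<Rightarrow> (nat \<Rightarrow> 'x::ab_group_add set) \<Rightarrow> nat \<Rightarrow> 'x \<Rightarrow> 'x" where
  "proj r Xs i x = (THE y. \<exists>f. (\<forall>j\<in>{1..r}. f j \<in> Xs j) \<and> x = (\<Sum>j\<in>{1..r}. f j) \<and> f i = y)"

definition separable :: "nat \<Rightarrow> (nat \<Rightarrow> 'x::ab_group_add set) \<Rightarrow> ('x \<Rightarrow> real) \<Rightarrow> bool" where
  "separable r Xs h \<longleftrightarrow> (\<forall>x. h x \<ge> 0) \<and> (\<forall>x. h x = (\<Sum>i\<in>{1..r}. h (proj r Xs i x)))"

text \<open>Cost-to-go with k steps remaining and inputs restricted to the set U:
  ctg 0 = g, ctg (k+1) x = g x + min_{u\<in>U} ctg k (A x + B u).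
  Thus J*_t = ctg (T - t) and J* = J*_0 = ctg T.  The minimum is written as an
  infimum; under the standing assumption it is attained.\<close>
fun ctg :: "('x::ab_group_add \<Rightarrow> 'x) \<Rightarrow> ('u \<Rightarrow> 'x) \<Rightarrow> ('x \<Rightarrow> real) \<Rightarrow> 'u set \<Rightarrow> nat \<Rightarrow> 'x \<Rightarrow> real" where
  "ctg A B g U 0 x = g x"
| "ctg A B g U (Suc k) x = g x + Inf ((\<lambda>u. ctg A B g U k (A x + B u)) ` U)"

definition Espace :: "('u \<Rightarrow> 'x) \<Rightarrow> 'x set \<Rightarrow> 'u set" where
  "Espace B Xi = {u. B u \<in> Xi}"

text \<open>The sum (direct, since B is injective) of the E_i.\<close>
definition Esum :: "('u::ab_group_add \<Rightarrow> 'x) \<Rightarrow> nat \<Rightarrow> (nat \<Rightarrow> 'x set) \<Rightarrow> 'u set" where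
  "Esum B r Xs = {\<Sum>i\<in>{1..r}. f i | f. \<forall>i\<in>{1..r}. f i \<in> Espace B (Xs i)}"

end

theory Submission
  imports Defs
begin

text \<open>Restricting the inputs to E_i can only raise the cost to go, so J* \<le> J_i* on X_i.
  Conversely, the argmin hypothesis provides an optimal input u = \<Sum>_j e_j with e_j \<in> E_j.
  Since every X_j is A-invariant, the i-th component of the successor Ax + Bu is
  A(\<rho>_i x) + Be_i, the successor of \<rho>_i x under an admissible input of the subproblem.
  Together with g(\<rho>_i x) \<le> g x, which holds because g is separable and nonnegative,
  induction on the horizon gives J_i*(\<rho>_i x) \<le> J*(x), and \<rho>_i x = x on X_i.\<close>

lemma
  assumes "is_decomposition scale A r Xs" "i \<in> {1..r}"
  shows decomposition_subspace: "module.subspace scale (Xs i)"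
    and decomposition_invariant: "A ` Xs i \<subseteq> Xs i"
  using assms unfolding is_decomposition_def by blast+

lemma decomposition_exists:
  assumes "is_decomposition scale A r Xs"
  obtains f where "\<forall>j\<in>{1..r}. f j \<in> Xs j" "x = (\<Sum>j\<in>{1..r}. f j)"
  using assms unfolding is_decomposition_def by blast

lemma decomposition_components_unique:
  assumes "module scale" "is_decomposition scale A r Xs"
    and "\<forall>j\<in>{1..r}. f j \<in> Xs j" "\<forall>j\<in>{1..r}. f' j \<in> Xs j"
    and "(\<Sum>j\<in>{1..r}. f j) = (\<Sum>j\<in>{1..r}. f' j)"
  shows "\<forall>j\<in>{1..r}. f j = f' j"
proof -
  have independent: "\<And>h. (\<forall>j\<in>{1..r}. h j \<in> Xs j) \<and> (\<Sum>j\<in>{1..r}. h j) = 0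
      \<Longrightarrow> \<forall>j\<in>{1..r}. h j = 0"
    using assms(2) unfolding is_decomposition_def by blast
  have "\<forall>j\<in>{1..r}. f j - f' j \<in> Xs j"
    using assms(3,4) decomposition_subspace[OF assms(2)] module.subspace_diff[OF assms(1)] by blast
  moreover have "(\<Sum>j\<in>{1..r}. f j - f' j) = 0"
    using assms(5) by (simp add: sum_subtractf)
  ultimately have "\<forall>j\<in>{1..r}. f j - f' j = 0"
    using independent[of "\<lambda>j. f j - f' j"] by blast
  then show ?thesis by simp
qed

lemma proj_eqI:
  assumes "module scale" "is_decomposition scale A r Xs" "i \<in> {1..r}"
    and "\<forall>j\<in>{1..r}. f j \<in> Xs j" "x = (\<Sum>j\<in>{1..r}. f j)"
  shows "proj r Xs i x = f i"
  unfolding proj_def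
proof (rule the_equality)
  show "\<exists>f'. (\<forall>j\<in>{1..r}. f' j \<in> Xs j) \<and> x = (\<Sum>j\<in>{1..r}. f' j) \<and> f' i = f i"
    using assms(4,5) by blast
next
  fix y assume "\<exists>f'. (\<forall>j\<in>{1..r}. f' j \<in> Xs j) \<and> x = (\<Sum>j\<in>{1..r}. f' j) \<and> f' i = y"
  then obtain f' where "\<forall>j\<in>{1..r}. f' j \<in> Xs j" "x = (\<Sum>j\<in>{1..r}. f' j)" "f' i = y"
    by blast
  then show "y = f i"
    using decomposition_components_unique[OF assms(1,2,4)] assms(3,5) by simp
qed

lemma proj_self:
  assumes "module scale" "is_decomposition scale A r Xs" "i \<in> {1..r}" "x \<in> Xs i"
  shows "proj r Xs i x = x"
proof -
  let ?f = "\<lambda>j. if j = i then x else 0"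
  have "\<forall>j\<in>{1..r}. ?f j \<in> Xs j"
    using assms(4) decomposition_subspace[OF assms(2)] module.subspace_0[OF assms(1)] by simp
  moreover have "x = (\<Sum>j\<in>{1..r}. ?f j)"
    using assms(3) by simp
  ultimately have "proj r Xs i x = ?f i"
    by (rule proj_eqI[OF assms(1-3)])
  then show ?thesis by simp
qed

lemma separable_proj_le:
  assumes "separable r Xs g" "i \<in> {1..r}"
  shows "g (proj r Xs i x) \<le> g x"
proof -
  have nonneg: "\<forall>y. g y \<ge> 0" and split: "g x = (\<Sum>j\<in>{1..r}. g (proj r Xs j x))"
    using assms(1) unfolding separable_def by blast+
  have "g (proj r Xs i x) \<le> (\<Sum>j\<in>{1..r}. g (proj r Xs j x))"
    using assms(2) nonneg by (intro member_le_sum) auto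
  then show ?thesis
    by (simp only: split)
qed

lemma zero_mem_Espace:
  assumes "Vector_Spaces.linear scaleU scaleX B" "is_decomposition scaleX A r Xs" "i \<in> {1..r}"
  shows "0 \<in> Espace B (Xs i)"
proof -
  have hB: "module_hom scaleU scaleX B"
    using assms(1) by (simp add: linear_iff_module_hom)
  then have "0 \<in> Xs i"
    using module.subspace_0 decomposition_subspace[OF assms(2,3)] by (auto simp: module_hom_def)
  then show ?thesis
    unfolding Espace_def using module_hom.zero[OF hB] by simp
qed

lemma proj_successor:
  assumes "Vector_Spaces.linear scaleX scaleX A" "Vector_Spaces.linear scaleU scaleX B"
    and "is_decomposition scaleX A r Xs" "i \<in> {1..r}" "u \<in> Esum B r Xs"
  obtains e where "e \<in> Espace B (Xs i)" "proj r Xs i (A x + B u) = A (proj r Xs i x) + B e"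
proof -
  have hA: "module_hom scaleX scaleX A" and hB: "module_hom scaleU scaleX B"
    using assms(1,2) by (simp_all add: linear_iff_module_hom)
  have modX: "module scaleX"
    using hA by (simp add: module_hom_def)
  obtain e where e: "\<forall>j\<in>{1..r}. e j \<in> Espace B (Xs j)" and u: "u = (\<Sum>j\<in>{1..r}. e j)"
    using assms(5) unfolding Esum_def by blast
  obtain f where f: "\<forall>j\<in>{1..r}. f j \<in> Xs j" and x: "x = (\<Sum>j\<in>{1..r}. f j)"
    using decomposition_exists[OF assms(3)] by blast
  have "A x + B u = (\<Sum>j\<in>{1..r}. A (f j) + B (e j))"
    unfolding x u module_hom.sum[OF hA] module_hom.sum[OF hB] by (simp add: sum.distrib)
  moreover have "\<forall>j\<in>{1..r}. A (f j) + B (e j) \<in> Xs j"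
  proof
    fix j assume j: "j \<in> {1..r}"
    then have "A (f j) \<in> Xs j" "B (e j) \<in> Xs j"
      using f e decomposition_invariant[OF assms(3)] unfolding Espace_def by blast+
    then show "A (f j) + B (e j) \<in> Xs j"
      using module.subspace_add[OF modX decomposition_subspace[OF assms(3) j]] by blast
  qed
  ultimately have "proj r Xs i (A x + B u) = A (f i) + B (e i)"
    using proj_eqI[OF modX assms(3,4), of "\<lambda>j. A (f j) + B (e j)"] by simp
  moreover have "proj r Xs i x = f i"
    using proj_eqI[OF modX assms(3,4) f x] .
  ultimately show ?thesis
    using that[of "e i"] e assms(4) by simp
qed

lemma ctg_nonneg:
  assumes "\<forall>x. g x \<ge> 0" "U \<noteq> {}"
  shows "0 \<le> ctg A B g U k x"
proof (induction k arbitrary: x)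
  case 0
  then show ?case using assms(1) by simp
next
  case (Suc k)
  have "0 \<le> Inf ((\<lambda>u. ctg A B g U k (A x + B u)) ` U)"
    using Suc assms(2) by (intro cInf_greatest) auto
  then show ?case using assms(1) by simp
qed

lemma bdd_below_ctg_image:
  assumes "\<forall>x. g x \<ge> 0" "U \<noteq> {}"
  shows "bdd_below ((\<lambda>u. ctg A B g U k (A x + B u)) ` V)"
  using ctg_nonneg[OF assms] by (intro bdd_belowI[of _ 0]) auto

lemma ctg_restrict_inputs_ge:
  assumes "\<forall>x. g x \<ge> 0" "V \<noteq> {}" "V \<subseteq> U"
  shows "ctg A B g U k x \<le> ctg A B g V k x"
proof (induction k arbitrary: x)
  case 0
  then show ?case by simp
next
  case (Suc k)
  let ?costU = "\<lambda>u. ctg A B g U k (A x + B u)" and ?costV = "\<lambda>u. ctg A B g V k (A x + B u)"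
  have "Inf (?costU ` U) \<le> Inf (?costV ` V)"
  proof (rule cInf_greatest)
    show "?costV ` V \<noteq> {}"
      using assms(2) by blast
  next
    fix c assume "c \<in> ?costV ` V"
    then obtain u where u: "u \<in> V" "c = ?costV u"
      by blast
    have "Inf (?costU ` U) \<le> ?costU u"
      using u assms by (intro cInf_lower bdd_below_ctg_image) auto
    also have "\<dots> \<le> c"
      using Suc u by simp
    finally show "Inf (?costU ` U) \<le> c" .
  qed
  then show ?case by simp
qed

lemma ctg_proj_le:
  assumes linA: "Vector_Spaces.linear scaleX scaleX A"
    and linB: "Vector_Spaces.linear scaleU scaleX B"
    and decomp: "is_decomposition scaleX A r Xs" and sep: "separable r Xs g" and i: "i \<in> {1..r}"
    and argmin: "\<forall>k<K. \<forall>y. \<exists>u\<in>Esum B r Xs. \<forall>v.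
       ctg A B g UNIV k (A y + B u) \<le> ctg A B g UNIV k (A y + B v)"
    and "k \<le> K"
  shows "ctg A B g (Espace B (Xs i)) k (proj r Xs i x) \<le> ctg A B g UNIV k x"
  using \<open>k \<le> K\<close>
proof (induction k arbitrary: x)
  case 0
  then show ?case
    using separable_proj_le[OF sep i] by simp
next
  case (Suc k)
  let ?E = "Espace B (Xs i)" and ?px = "proj r Xs i x"
  have g_nonneg: "\<forall>x. g x \<ge> 0"
    using sep unfolding separable_def by blast
  obtain u where "u \<in> Esum B r Xs"
    and u_opt: "\<forall>v. ctg A B g UNIV k (A x + B u) \<le> ctg A B g UNIV k (A x + B v)"
    using argmin Suc.prems by (meson Suc_le_lessD)
  then obtain e where e: "e \<in> ?E" and proj_succ: "proj r Xs i (A x + B u) = A ?px + B e"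
    using proj_successor[OF linA linB decomp i] by metis
  have "Inf ((\<lambda>v. ctg A B g ?E k (A ?px + B v)) ` ?E) \<le> ctg A B g ?E k (A ?px + B e)"
    using e zero_mem_Espace[OF linB decomp i] g_nonneg
    by (intro cInf_lower bdd_below_ctg_image) auto
  also have "\<dots> \<le> ctg A B g UNIV k (A x + B u)"
    using Suc.IH[of "A x + B u"] Suc.prems proj_succ by simp
  also have "\<dots> = Inf ((\<lambda>v. ctg A B g UNIV k (A x + B v)) ` UNIV)"
    using u_opt by (intro cInf_eq_minimum[symmetric]) auto
  finally show ?case
    using separable_proj_le[OF sep i, of x] by simp
qed

theorem corollary2:
  fixes scaleX :: "'f::field \<Rightarrow> 'x::ab_group_add \<Rightarrow> 'x"
    and scaleU :: "'f \<Rightarrow> 'u::ab_group_add \<Rightarrow> 'u"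
    and A :: "'x \<Rightarrow> 'x" and B :: "'u \<Rightarrow> 'x" and g :: "'x \<Rightarrow> real"
    and r :: nat and Xs :: "nat \<Rightarrow> 'x set" and T :: nat
  assumes fdX: "\<exists>b. finite_dimensional_vector_space scaleX b"
    and fdU: "\<exists>b. finite_dimensional_vector_space scaleU b"
    and linA: "Vector_Spaces.linear scaleX scaleX A"
    and linB: "Vector_Spaces.linear scaleU scaleX B"
    and injB: "inj B"
    and g_nonneg: "\<forall>x. g x \<ge> 0"
    and g_zero: "\<forall>x. g x = 0 \<longleftrightarrow> x = 0"
    and decomp: "is_decomposition scaleX A r Xs"
    and g_sep: "separable r Xs g"
    and T_pos: "T > 0"
    and attained: "\<forall>t<T. \<forall>x. \<exists>u. \<forall>v.
         ctg A B g UNIV (T - Suc t) (A x + B u) \<le> ctg A B g UNIV (T - Suc t) (A x + B v)"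
    and attained_sub: "\<forall>i\<in>{1..r}. \<forall>t<T. \<forall>z\<in>Xs i. \<exists>u\<in>Espace B (Xs i). \<forall>v\<in>Espace B (Xs i).
         ctg A B g (Espace B (Xs i)) (T - Suc t) (A z + B u)
           \<le> ctg A B g (Espace B (Xs i)) (T - Suc t) (A z + B v)"
    and argmin_hyp: "\<forall>x. \<forall>t<T. \<exists>u\<in>Esum B r Xs. \<forall>v.
         ctg A B g UNIV (T - Suc t) (A x + B u) \<le> ctg A B g UNIV (T - Suc t) (A x + B v)"
  shows "\<forall>i\<in>{1..r}. \<forall>x\<in>Xs i. ctg A B g UNIV T x = ctg A B g (Espace B (Xs i)) T x"
proof (intro ballI)
  fix i x assume i: "i \<in> {1..r}" and x: "x \<in> Xs i"
  have modX: "module scaleX"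
    using linA by (simp add: linear_iff_module_hom module_hom_def)
  have argmin: "\<forall>k<T. \<forall>y. \<exists>u\<in>Esum B r Xs. \<forall>v.
      ctg A B g UNIV k (A y + B u) \<le> ctg A B g UNIV k (A y + B v)"
  proof (intro allI impI)
    fix k y assume "k < T"
    then show "\<exists>u\<in>Esum B r Xs. \<forall>v. ctg A B g UNIV k (A y + B u) \<le> ctg A B g UNIV k (A y + B v)"
      using argmin_hyp[THEN spec[of _ y], THEN spec[of _ "T - Suc k"]] by simp
  qed
  have "ctg A B g UNIV T x \<le> ctg A B g (Espace B (Xs i)) T x"
    using g_nonneg zero_mem_Espace[OF linB decomp i] by (intro ctg_restrict_inputs_ge) auto
  moreover have "ctg A B g (Espace B (Xs i)) T x \<le> ctg A B g UNIV T x"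
    using ctg_proj_le[OF linA linB decomp g_sep i argmin order_refl, of x]
      proj_self[OF modX decomp i x] by simp
  ultimately show "ctg A B g UNIV T x = ctg A B g (Espace B (Xs i)) T x"
    by (rule antisym)
qed

end
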